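(* Let $R$ be a $*$-ring. The following are equivalent: (1) $R$ is strongly $\pi$-$*$-regular. (2) $R/J(R)$ is strongly $\pi$-$*$-regular, $J(R)$ is nil, every projection of $R$ is central, and every projection of $R/J(R)$ lifts to a projection of $R$. (3) $R/J(R)$ is strongly $*$-regular, $J(R)$ is nil, and every idempotent of $R/J(R)$ lifts to a central projection of $R$.
   Context: A $*$-ring is a ring with identity with an involution $*$. $J(R)$ is the Jacobson radical; it satisfies $J(R)^*\subseteq J(R)$, so $R/J(R)$ is a $*$-ring with the induced involution $(a+J(R))^*=a^*+J(R)$. A projection is $p$ with $p^2=p=p^*$. A $*$-ring is strongly $*$-regular if every element $a$ can be written $a=pu=up$ with $p$ a projection and $u$ a unit; it is strongly $\pi$-$*$-regular if for every $a$ there exist a projection $e$, a unit $u$ and $m\ge1$ with $a^m=eu$ and $a,e,u$ pairwise commuting. *)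

theory Defs
  imports "HOL-Algebra.QuotRing"
begin

definition star_ring :: "('a, 'b) ring_scheme \<Rightarrow> ('a \<Rightarrow> 'a) \<Rightarrow> bool" where
  "star_ring R s \<longleftrightarrow> ring R \<and> (\<forall>a \<in> carrier R. s a \<in> carrier R) \<and>
     (\<forall>a \<in> carrier R. \<forall>b \<in> carrier R. s (a \<oplus>\<^bsub>R\<^esub> b) = s a \<oplus>\<^bsub>R\<^esub> s b) \<and>
     (\<forall>a \<in> carrier R. \<forall>b \<in> carrier R. s (a \<otimes>\<^bsub>R\<^esub> b) = s b \<otimes>\<^bsub>R\<^esub> s a) \<and>
     (\<forall>a \<in> carrier R. s (s a) = a)"

definition projection :: "('a, 'b) ring_scheme \<Rightarrow> ('a \<Rightarrow> 'a) \<Rightarrow> 'a \<Rightarrow> bool" where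
  "projection R s p \<longleftrightarrow> p \<in> carrier R \<and> p \<otimes>\<^bsub>R\<^esub> p = p \<and> s p = p"

definition idempotent_el :: "('a, 'b) ring_scheme \<Rightarrow> 'a \<Rightarrow> bool" where
  "idempotent_el R e \<longleftrightarrow> e \<in> carrier R \<and> e \<otimes>\<^bsub>R\<^esub> e = e"

definition central :: "('a, 'b) ring_scheme \<Rightarrow> 'a \<Rightarrow> bool" where
  "central R x \<longleftrightarrow> x \<in> carrier R \<and> (\<forall>y \<in> carrier R. x \<otimes>\<^bsub>R\<^esub> y = y \<otimes>\<^bsub>R\<^esub> x)"

definition strongly_star_regular :: "('a, 'b) ring_scheme \<Rightarrow> ('a \<Rightarrow> 'a) \<Rightarrow> bool" where
  "strongly_star_regular R s \<longleftrightarrow>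
     (\<forall>a \<in> carrier R. \<exists>p u. projection R s p \<and> u \<in> Units R \<and>
        a = p \<otimes>\<^bsub>R\<^esub> u \<and> a = u \<otimes>\<^bsub>R\<^esub> p)"

definition strongly_pi_star_regular :: "('a, 'b) ring_scheme \<Rightarrow> ('a \<Rightarrow> 'a) \<Rightarrow> bool" where
  "strongly_pi_star_regular R s \<longleftrightarrow>
     (\<forall>a \<in> carrier R. \<exists>e u (m::nat). m \<ge> 1 \<and> projection R s e \<and> u \<in> Units R \<and>
        a [^]\<^bsub>R\<^esub> m = e \<otimes>\<^bsub>R\<^esub> u \<and>
        a \<otimes>\<^bsub>R\<^esub> e = e \<otimes>\<^bsub>R\<^esub> a \<and> a \<otimes>\<^bsub>R\<^esub> u = u \<otimes>\<^bsub>R\<^esub> a \<and>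
        e \<otimes>\<^bsub>R\<^esub> u = u \<otimes>\<^bsub>R\<^esub> e)"

definition left_ideal :: "'a set \<Rightarrow> ('a, 'b) ring_scheme \<Rightarrow> bool" where
  "left_ideal I R \<longleftrightarrow> additive_subgroup I R \<and>
     (\<forall>r \<in> carrier R. \<forall>x \<in> I. r \<otimes>\<^bsub>R\<^esub> x \<in> I)"

definition maximal_left_ideal :: "'a set \<Rightarrow> ('a, 'b) ring_scheme \<Rightarrow> bool" where
  "maximal_left_ideal I R \<longleftrightarrow> left_ideal I R \<and> I \<noteq> carrier R \<and>
     (\<forall>K. left_ideal K R \<and> I \<subseteq> K \<longrightarrow> K = I \<or> K = carrier R)"

definition jacobson :: "('a, 'b) ring_scheme \<Rightarrow> 'a set" where
  "jacobson R = carrier R \<inter> \<Inter>{I. maximal_left_ideal I R}"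

definition nil_set :: "('a, 'b) ring_scheme \<Rightarrow> 'a set \<Rightarrow> bool" where
  "nil_set R I \<longleftrightarrow> (\<forall>a \<in> I. \<exists>n::nat. a [^]\<^bsub>R\<^esub> n = \<zero>\<^bsub>R\<^esub>)"

text \<open>The involution induced on R/J(R): (a + J)* = a* + J, realised as the image of the coset.\<close>
definition quot_star :: "('a \<Rightarrow> 'a) \<Rightarrow> 'a set \<Rightarrow> 'a set" where
  "quot_star s X = s ` X"

end

theory Submission
  imports Defs
begin

text \<open>In a strongly \<open>\<pi>\<close>-\<open>*\<close>-regular ring every idempotent is a projection, and every
  projection \<open>p\<close> is central: \<open>p + px(1 - p)\<close> is idempotent, hence self-adjoint, which forces
  \<open>px(1 - p) = 0\<close>, and dually \<open>(1 - p)xp = 0\<close>. With central projections, nilpotent elements lie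
  in \<open>J(R)\<close>, and \<open>J(R)\<close> is nil because the projection in the decomposition of a power of an
  element of \<open>J(R)\<close> is an idempotent of \<open>J(R)\<close>, hence zero. Reducing \<open>a\<^sup>m = eu\<close> modulo \<open>J(R)\<close>
  gives the decompositions in \<open>R/J(R)\<close>; writing \<open>a\<close> as \<open>e(ea + 1 - e)\<close> up to the nilpotent
  \<open>(1 - e)a\<close> even makes \<open>R/J(R)\<close> strongly \<open>*\<close>-regular. Conversely, if \<open>a\<^sup>m \<equiv> pv\<close> modulo a nil
  \<open>J(R)\<close> with \<open>p\<close> a central projection and \<open>v\<close> a unit, then \<open>c = pa\<^sup>m + 1 - p\<close> is a unit
  and \<open>(1 - p)a\<^sup>m\<close> is nilpotent, so some power \<open>a\<^sup>N\<close> equals \<open>p c\<^sup>K\<close>.\<close>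

section \<open>Units and central idempotents\<close>

context ring
begin

lemma Units_if_left_right_inverse:
  assumes "a \<in> carrier R" "v \<in> carrier R" "b \<in> carrier R" "a \<otimes> v = \<one>" "v \<otimes> b = \<one>"
  shows "v \<in> Units R"
proof -
  have "a = b" using inv_unique[OF assms(4,5) assms(2,1,3)] .
  then show ?thesis using assms unfolding Units_def by auto
qed

lemma Units_nat_pow: "u \<in> Units R \<Longrightarrow> u [^] (k::nat) \<in> Units R"
  by (induct k) auto

lemma Units_if_nat_pow_Units:
  assumes x: "x \<in> carrier R" and u: "x [^] Suc k \<in> Units R"
  shows "x \<in> Units R"
proof -
  have i: "inv (x [^] Suc k) \<in> carrier R" using u by auto
  have "(inv (x [^] Suc k) \<otimes> x [^] k) \<otimes> x = \<one>" using u i x by (simp add: m_assoc)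
  moreover have "x \<otimes> (x [^] k \<otimes> inv (x [^] Suc k)) = \<one>"
    using u i x by (simp add: m_assoc[symmetric] nat_pow_Suc2[symmetric])
  ultimately show ?thesis using Units_if_left_right_inverse i x by (meson m_closed nat_pow_closed)
qed

lemma Units_inv_commute:
  assumes "a \<in> carrier R" "u \<in> Units R" "a \<otimes> u = u \<otimes> a"
  shows "a \<otimes> inv u = inv u \<otimes> a"
proof -
  have c: "u \<in> carrier R" "inv u \<in> carrier R" using assms by auto
  have "a \<otimes> inv u = (inv u \<otimes> u) \<otimes> a \<otimes> inv u" using assms c by simp
  also have "\<dots> = inv u \<otimes> (u \<otimes> a) \<otimes> inv u" using assms c by (simp only: m_assoc)
  also have "\<dots> = inv u \<otimes> (a \<otimes> u) \<otimes> inv u" using assms by simp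
  also have "\<dots> = inv u \<otimes> a" using assms(1,2) c by (simp add: m_assoc)
  finally show ?thesis .
qed

text \<open>If \<open>w\<close> inverts \<open>1 - pq\<close>, then \<open>1 + qwp\<close> inverts \<open>1 - qp\<close>.\<close>
lemma Units_one_minus_swap:
  assumes p: "p \<in> carrier R" and q: "q \<in> carrier R" and u: "\<one> \<ominus> p \<otimes> q \<in> Units R"
  shows "\<one> \<ominus> q \<otimes> p \<in> Units R"
proof -
  define w where "w = inv (\<one> \<ominus> p \<otimes> q)"
  have w: "w \<in> carrier R" using u w_def by auto
  have wl: "w \<ominus> w \<otimes> p \<otimes> q = \<one>"
  proof -
    have "w \<otimes> (\<one> \<ominus> p \<otimes> q) = \<one>" using u w_def by simp
    then show ?thesis using p q w by (simp add: ring_simprules)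
  qed
  have wr: "w \<ominus> p \<otimes> q \<otimes> w = \<one>"
  proof -
    have "(\<one> \<ominus> p \<otimes> q) \<otimes> w = \<one>" using u w_def by simp
    then show ?thesis using p q w by (simp add: ring_simprules)
  qed
  have "(\<one> \<ominus> q \<otimes> p) \<otimes> (\<one> \<oplus> q \<otimes> w \<otimes> p) = \<one> \<ominus> q \<otimes> p \<oplus> q \<otimes> (w \<ominus> p \<otimes> q \<otimes> w) \<otimes> p"
    using p q w by (simp add: ring_simprules)
  then have r: "(\<one> \<ominus> q \<otimes> p) \<otimes> (\<one> \<oplus> q \<otimes> w \<otimes> p) = \<one>"
    using wr p q by (simp add: ring_simprules)
  have "(\<one> \<oplus> q \<otimes> w \<otimes> p) \<otimes> (\<one> \<ominus> q \<otimes> p) = \<one> \<ominus> q \<otimes> p \<oplus> q \<otimes> (w \<ominus> w \<otimes> p \<otimes> q) \<otimes> p"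
    using p q w by (simp add: ring_simprules)
  then have l: "(\<one> \<oplus> q \<otimes> w \<otimes> p) \<otimes> (\<one> \<ominus> q \<otimes> p) = \<one>"
    using wl p q by (simp add: ring_simprules)
  show ?thesis using Units_if_left_right_inverse[OF _ _ _ l r] p q w by simp
qed

lemma one_minus_geometric_sum:
  assumes c: "c \<in> carrier R"
  shows "\<exists>g\<in>carrier R. g \<otimes> (\<one> \<ominus> c) = \<one> \<ominus> c [^] (k::nat) \<and> (\<one> \<ominus> c) \<otimes> g = \<one> \<ominus> c [^] k"
proof (induct k)
  case 0 then show ?case using c by (intro bexI[of _ \<zero>]) (auto simp: ring_simprules)
next
  case (Suc k)
  then obtain g where g: "g \<in> carrier R" "g \<otimes> (\<one> \<ominus> c) = \<one> \<ominus> c [^] k" "(\<one> \<ominus> c) \<otimes> g = \<one> \<ominus> c [^] k"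
    by blast
  have "\<one> \<ominus> c \<oplus> c \<otimes> (\<one> \<ominus> c [^] k) = c \<oplus> (\<one> \<oplus> (\<ominus> c \<oplus> \<ominus> (c \<otimes> c [^] k)))"
    using c by (simp add: ring_simprules)
  also have "\<dots> = \<one> \<oplus> (c \<oplus> (\<ominus> c \<oplus> \<ominus> (c \<otimes> c [^] k)))"
    by (rule a_lcomm) (use c in simp_all)
  also have "\<dots> = \<one> \<oplus> \<ominus> (c \<otimes> c [^] k)" using c by (simp add: r_neg2)
  also have "\<dots> = \<one> \<ominus> c [^] Suc k"
    by (simp only: minus_eq nat_pow_Suc2[OF c])
  finally have "\<one> \<ominus> c \<oplus> c \<otimes> (\<one> \<ominus> c [^] k) = \<one> \<ominus> c [^] Suc k" .
  moreover have "(\<one> \<oplus> c \<otimes> g) \<otimes> (\<one> \<ominus> c) = \<one> \<ominus> c \<oplus> c \<otimes> (g \<otimes> (\<one> \<ominus> c))"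
    "(\<one> \<ominus> c) \<otimes> (\<one> \<oplus> c \<otimes> g) = \<one> \<ominus> c \<oplus> c \<otimes> ((\<one> \<ominus> c) \<otimes> g)"
    using c g(1) by (simp_all add: ring_simprules)
  ultimately show ?case using g c by (intro bexI[of _ "\<one> \<oplus> c \<otimes> g"]) auto
qed

lemma Units_one_minus_nilpotent:
  assumes c: "c \<in> carrier R" and n: "c [^] (k::nat) = \<zero>"
  shows "\<one> \<ominus> c \<in> Units R"
proof -
  obtain g where "g \<in> carrier R" "g \<otimes> (\<one> \<ominus> c) = \<one>" "(\<one> \<ominus> c) \<otimes> g = \<one>"
    using one_minus_geometric_sum[OF c, of k] n by (auto simp: ring_simprules)
  then show ?thesis using Units_if_left_right_inverse[of g "\<one> \<ominus> c" g] c by simp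
qed

lemma idempotent_nat_pow:
  assumes "a \<in> carrier R" "a \<otimes> a = a" shows "a [^] Suc k = a"
  using assms by (induct k) auto

lemma idempotent_eq_if_commuting_unit_factor:
  assumes a: "a \<in> carrier R" and e: "e \<in> carrier R" and u: "u \<in> Units R"
    and aa: "a \<otimes> a = a" and ee: "e \<otimes> e = e" and aeu: "a = e \<otimes> u"
    and ae: "a \<otimes> e = e \<otimes> a"
  shows "a = e"
proof -
  have uc: "u \<in> carrier R" "inv u \<in> carrier R" using u by auto
  have e1: "e = a \<otimes> inv u" using aeu u uc e by (simp add: m_assoc)
  have "a \<otimes> e = e" using e1 aa a uc by (metis m_assoc)
  moreover have "e \<otimes> a = a" using aeu ee e uc by (metis m_assoc)
  ultimately show ?thesis using ae by simp
qed

lemma central_commute: "central R p \<Longrightarrow> y \<in> carrier R \<Longrightarrow> p \<otimes> y = y \<otimes> p"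
  unfolding central_def by blast

lemma central_closed: "central R p \<Longrightarrow> p \<in> carrier R"
  unfolding central_def by blast

lemma central_idempotent_complement:
  assumes pc: "central R p" and pp: "p \<otimes> p = p"
  shows "central R (\<one> \<ominus> p)" "(\<one> \<ominus> p) \<otimes> (\<one> \<ominus> p) = \<one> \<ominus> p"
    "p \<otimes> (\<one> \<ominus> p) = \<zero>" "(\<one> \<ominus> p) \<otimes> p = \<zero>" "p \<oplus> (\<one> \<ominus> p) = \<one>"
proof -
  have p: "p \<in> carrier R" by (rule central_closed[OF pc])
  show "(\<one> \<ominus> p) \<otimes> (\<one> \<ominus> p) = \<one> \<ominus> p" "p \<otimes> (\<one> \<ominus> p) = \<zero>" "(\<one> \<ominus> p) \<otimes> p = \<zero>"
    using p pp by (simp_all add: ring_simprules)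
  show "p \<oplus> (\<one> \<ominus> p) = \<one>"
    using p by (simp add: minus_eq a_lcomm[of p] r_neg)
  have "(\<one> \<ominus> p) \<otimes> y = y \<otimes> (\<one> \<ominus> p)" if "y \<in> carrier R" for y
    using p that central_commute[OF pc that] by (simp add: ring_simprules)
  then show "central R (\<one> \<ominus> p)" unfolding central_def using p by simp
qed

lemma central_idempotent_corner_mult:
  assumes pc: "central R p" and pp: "p \<otimes> p = p" and x: "x \<in> carrier R" and y: "y \<in> carrier R"
  shows "(p \<otimes> x \<oplus> (\<one> \<ominus> p)) \<otimes> (p \<otimes> y \<oplus> (\<one> \<ominus> p)) = p \<otimes> (x \<otimes> y) \<oplus> (\<one> \<ominus> p)"
proof -
  define q where "q = \<one> \<ominus> p"
  have p: "p \<in> carrier R" by (rule central_closed[OF pc])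
  have q: "q \<in> carrier R" and qq: "q \<otimes> q = q" and pq: "p \<otimes> q = \<zero>" and qp: "q \<otimes> p = \<zero>"
    using central_idempotent_complement[OF pc pp] p unfolding q_def by auto
  have "(p \<otimes> x) \<otimes> (p \<otimes> y) = p \<otimes> ((x \<otimes> p) \<otimes> y)" using p x y by (simp add: m_assoc)
  also have "\<dots> = p \<otimes> ((p \<otimes> x) \<otimes> y)" by (simp only: central_commute[OF pc x])
  also have "\<dots> = p \<otimes> (x \<otimes> y)" using p x y pp by (simp add: m_assoc[symmetric])
  finally have 1: "(p \<otimes> x) \<otimes> (p \<otimes> y) = p \<otimes> (x \<otimes> y)" .
  have "(p \<otimes> x) \<otimes> q = p \<otimes> (q \<otimes> x)"
    using p q x central_commute[OF central_idempotent_complement(1)[OF pc pp] x]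
    unfolding q_def by (simp add: m_assoc)
  also have "\<dots> = \<zero>" using p q x pq by (simp add: m_assoc[symmetric])
  finally have 2: "(p \<otimes> x) \<otimes> q = \<zero>" .
  have 3: "q \<otimes> (p \<otimes> y) = \<zero>" using qp p q y by (simp add: m_assoc[symmetric])
  show ?thesis unfolding q_def[symmetric] using 1 2 3 p q x y qq by (simp add: l_distr r_distr)
qed

lemma central_idempotent_corner_pow:
  assumes pc: "central R p" and pp: "p \<otimes> p = p" and x: "x \<in> carrier R"
  shows "(p \<otimes> x \<oplus> (\<one> \<ominus> p)) [^] (k::nat) = p \<otimes> x [^] k \<oplus> (\<one> \<ominus> p)"
proof (induct k)
  case 0
  then show ?case using central_idempotent_complement(5)[OF pc pp] central_closed[OF pc] by simp
next
  case (Suc k)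
  then show ?case using central_idempotent_corner_mult[OF pc pp, of "x [^] k" x] x by simp
qed

lemma central_idempotent_corner_Units:
  assumes pc: "central R p" and pp: "p \<otimes> p = p" and u: "u \<in> Units R"
  shows "p \<otimes> u \<oplus> (\<one> \<ominus> p) \<in> Units R"
proof -
  have p: "p \<in> carrier R" by (rule central_closed[OF pc])
  have s: "p \<oplus> (\<one> \<ominus> p) = \<one>" by (rule central_idempotent_complement(5)[OF pc pp])
  have uc: "u \<in> carrier R" "inv u \<in> carrier R" using u by auto
  have l: "(p \<otimes> inv u \<oplus> (\<one> \<ominus> p)) \<otimes> (p \<otimes> u \<oplus> (\<one> \<ominus> p)) = \<one>"
    and r: "(p \<otimes> u \<oplus> (\<one> \<ominus> p)) \<otimes> (p \<otimes> inv u \<oplus> (\<one> \<ominus> p)) = \<one>"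
    using central_idempotent_corner_mult[OF pc pp] uc u s p by simp_all
  show ?thesis using Units_if_left_right_inverse[OF _ _ _ l r] p uc by simp
qed

lemma central_idempotent_mult_nat_pow:
  assumes qc: "central R q" and qq: "q \<otimes> q = q" and x: "x \<in> carrier R"
  shows "(q \<otimes> x) [^] (k::nat) \<otimes> q = q \<otimes> x [^] k"
proof (induct k)
  case 0
  then show ?case using central_closed[OF qc] by simp
next
  case (Suc k)
  have q: "q \<in> carrier R" by (rule central_closed[OF qc])
  have "(q \<otimes> x) \<otimes> q = q \<otimes> (x \<otimes> q)" using q x by (simp add: m_assoc)
  also have "\<dots> = q \<otimes> (q \<otimes> x)" by (simp only: central_commute[OF qc x])
  finally have "(q \<otimes> x) \<otimes> q = q \<otimes> (q \<otimes> x)" .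
  then have qxq: "(q \<otimes> x) \<otimes> q = q \<otimes> x" using q x qq by (simp add: m_assoc[symmetric])
  have "(q \<otimes> x) [^] Suc k \<otimes> q = (q \<otimes> x) [^] k \<otimes> ((q \<otimes> x) \<otimes> q)" using q x by (simp add: m_assoc)
  also have "\<dots> = ((q \<otimes> x) [^] k \<otimes> q) \<otimes> x" using qxq q x by (simp add: m_assoc)
  also have "\<dots> = q \<otimes> x [^] Suc k" using Suc q x by (simp add: m_assoc)
  finally show ?case .
qed

lemma central_idempotent_eq_zero_if_nilpotent_factor:
  assumes fc: "central R f" and ff: "f \<otimes> f = f" and z: "z \<in> carrier R" and n: "n \<in> carrier R"
    and zn: "z \<otimes> n = f" and nt: "n [^] (t::nat) = \<zero>"
  shows "f = \<zero>"
proof -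
  have f: "f \<in> carrier R" by (rule central_closed[OF fc])
  have "z [^] j \<otimes> (n [^] j \<otimes> f) = f" for j :: nat
  proof (induct j)
    case 0 then show ?case using f by simp
  next
    case (Suc j)
    have c: "n [^] j \<in> carrier R" "z [^] j \<in> carrier R" using n z by auto
    have nS: "n [^] Suc j = n \<otimes> n [^] j" by (rule nat_pow_Suc2[OF n])
    have "z [^] Suc j \<otimes> (n [^] Suc j \<otimes> f) = z [^] j \<otimes> ((z \<otimes> n) \<otimes> (n [^] j \<otimes> f))"
      unfolding nS using c z n f by (simp add: m_assoc del: nat_pow_Suc)
    also have "\<dots> = z [^] j \<otimes> ((n [^] j \<otimes> f) \<otimes> f)"
      using zn central_commute[OF fc, of "n [^] j \<otimes> f"] c f by simp
    also have "\<dots> = f" using ff c f Suc by (simp add: m_assoc)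
    finally show ?case .
  qed
  from this[of t] show ?thesis using nt z f by simp
qed

lemma central_idempotent_absorbs_pow:
  assumes pc: "central R p" and pp: "p \<otimes> p = p" and b: "b \<in> carrier R"
    and nil: "((\<one> \<ominus> p) \<otimes> b) [^] (t::nat) = \<zero>"
  shows "b [^] Suc t = p \<otimes> b [^] Suc t"
proof -
  have p: "p \<in> carrier R" by (rule central_closed[OF pc])
  note q = central_idempotent_complement[OF pc pp]
  have "(\<one> \<ominus> p) \<otimes> b [^] Suc t = ((\<one> \<ominus> p) \<otimes> b) [^] Suc t \<otimes> (\<one> \<ominus> p)"
    by (rule central_idempotent_mult_nat_pow[OF q(1,2) b, symmetric])
  also have "\<dots> = \<zero>" using nil p b by simp
  finally have "(\<one> \<ominus> p) \<otimes> b [^] Suc t = \<zero>" .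
  moreover have "b [^] Suc t = p \<otimes> b [^] Suc t \<oplus> (\<one> \<ominus> p) \<otimes> b [^] Suc t"
    using q(5) p b l_distr[of p "\<one> \<ominus> p" "b [^] Suc t"] by simp
  ultimately show ?thesis using p b by simp
qed

end

section \<open>The Jacobson radical\<close>

context ring
begin

lemma left_idealI:
  assumes "H \<subseteq> carrier R" "\<zero> \<in> H" "\<And>x y. x \<in> H \<Longrightarrow> y \<in> H \<Longrightarrow> x \<oplus> y \<in> H"
    "\<And>x. x \<in> H \<Longrightarrow> \<ominus> x \<in> H" "\<And>r x. r \<in> carrier R \<Longrightarrow> x \<in> H \<Longrightarrow> r \<otimes> x \<in> H"
  shows "left_ideal H R"
proof -
  have "additive_subgroup H R"
    by (rule additive_subgroupI, rule subgroup.intro) (use assms in \<open>auto simp: a_inv_def[symmetric]\<close>)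
  then show ?thesis unfolding left_ideal_def using assms(5) by blast
qed

lemma left_idealD:
  assumes "left_ideal H R"
  shows "H \<subseteq> carrier R" "\<zero> \<in> H" "\<And>x y. x \<in> H \<Longrightarrow> y \<in> H \<Longrightarrow> x \<oplus> y \<in> H"
    "\<And>x. x \<in> H \<Longrightarrow> \<ominus> x \<in> H" "\<And>r x. r \<in> carrier R \<Longrightarrow> x \<in> H \<Longrightarrow> r \<otimes> x \<in> H"
proof -
  have a: "additive_subgroup H R" and m: "\<forall>r\<in>carrier R. \<forall>x\<in>H. r \<otimes> x \<in> H"
    using assms unfolding left_ideal_def by auto
  show "H \<subseteq> carrier R" by (rule additive_subgroup.a_subset[OF a])
  show "\<zero> \<in> H" by (rule additive_subgroup.zero_closed[OF a])
  show "\<And>x y. x \<in> H \<Longrightarrow> y \<in> H \<Longrightarrow> x \<oplus> y \<in> H" by (rule additive_subgroup.a_closed[OF a])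
  show "\<And>x. x \<in> H \<Longrightarrow> \<ominus> x \<in> H" by (rule additive_subgroup.a_inv_closed[OF a])
  show "\<And>r x. r \<in> carrier R \<Longrightarrow> x \<in> H \<Longrightarrow> r \<otimes> x \<in> H" using m by blast
qed

lemma left_ideal_eq_carrier_if_one:
  assumes "left_ideal H R" "\<one> \<in> H" shows "H = carrier R"
proof
  show "H \<subseteq> carrier R" using left_idealD(1)[OF assms(1)] .
  show "carrier R \<subseteq> H"
  proof
    fix x assume "x \<in> carrier R"
    then have "x \<otimes> \<one> \<in> H" using left_idealD(5)[OF assms(1)] assms(2) by blast
    then show "x \<in> H" using \<open>x \<in> carrier R\<close> by simp
  qed
qed

lemma left_ideal_Union_chain:
  assumes "C \<noteq> {}" and li: "\<And>X. X \<in> C \<Longrightarrow> left_ideal X R"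
    and ch: "\<And>X Y. X \<in> C \<Longrightarrow> Y \<in> C \<Longrightarrow> X \<subseteq> Y \<or> Y \<subseteq> X"
  shows "left_ideal (\<Union>C) R"
proof (rule left_idealI)
  obtain X0 where X0: "X0 \<in> C" using assms(1) by blast
  show "\<Union>C \<subseteq> carrier R" using left_idealD(1)[OF li] by blast
  show "\<zero> \<in> \<Union>C" using left_idealD(2)[OF li[OF X0]] X0 by blast
  show "x \<oplus> y \<in> \<Union>C" if xy: "x \<in> \<Union>C" "y \<in> \<Union>C" for x y
  proof -
    obtain X Y where XY: "X \<in> C" "Y \<in> C" "x \<in> X" "y \<in> Y" using xy by blast
    from ch[OF XY(1,2)] show ?thesis
    proof
      assume "X \<subseteq> Y"
      then show ?thesis using left_idealD(3)[OF li[OF XY(2)], of x y] XY by blast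
    next
      assume "Y \<subseteq> X"
      then show ?thesis using left_idealD(3)[OF li[OF XY(1)], of x y] XY by blast
    qed
  qed
  show "\<ominus> x \<in> \<Union>C" if "x \<in> \<Union>C" for x
    using that left_idealD(4)[OF li] by blast
  show "r \<otimes> x \<in> \<Union>C" if "r \<in> carrier R" "x \<in> \<Union>C" for r x
    using that left_idealD(5)[OF li] by blast
qed

lemma exists_maximal_left_ideal:
  assumes L: "left_ideal L R" and nL: "\<one> \<notin> L"
  shows "\<exists>M. maximal_left_ideal M R \<and> L \<subseteq> M"
proof -
  define A where "A = {K. left_ideal K R \<and> L \<subseteq> K \<and> \<one> \<notin> K}"
  have "\<forall>C\<in>chains A. \<exists>U\<in>A. \<forall>X\<in>C. X \<subseteq> U"
  proof
    fix C assume C: "C \<in> chains A"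
    show "\<exists>U\<in>A. \<forall>X\<in>C. X \<subseteq> U"
    proof (cases "C = {}")
      case True
      then show ?thesis using L nL unfolding A_def by blast
    next
      case False
      have CA: "C \<subseteq> A" and ch: "\<And>X Y. X \<in> C \<Longrightarrow> Y \<in> C \<Longrightarrow> X \<subseteq> Y \<or> Y \<subseteq> X"
        using C unfolding chains_alt_def subset_chain_def by auto
      have "left_ideal (\<Union>C) R"
        by (rule left_ideal_Union_chain[OF False _ ch]) (use CA A_def in blast)
      moreover have "L \<subseteq> \<Union>C" "\<one> \<notin> \<Union>C" using CA False unfolding A_def by blast+
      ultimately have "\<Union>C \<in> A" unfolding A_def by blast
      then show ?thesis by blast
    qed
  qed
  from Zorn_Lemma2[OF this] obtain M where M: "M \<in> A" and Mmax: "\<forall>X\<in>A. M \<subseteq> X \<longrightarrow> X = M"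
    by (elim bexE)
  have Mli: "left_ideal M R" and LM: "L \<subseteq> M" and n1: "\<one> \<notin> M" using M unfolding A_def by blast+
  have "maximal_left_ideal M R"
    unfolding maximal_left_ideal_def
  proof (intro conjI allI impI)
    show "left_ideal M R" by (rule Mli)
    show "M \<noteq> carrier R" using n1 by blast
    fix K assume K: "left_ideal K R \<and> M \<subseteq> K"
    show "K = M \<or> K = carrier R"
    proof (cases "\<one> \<in> K")
      case True then show ?thesis using left_ideal_eq_carrier_if_one K by blast
    next
      case False
      then have "K \<in> A" using K LM unfolding A_def by blast
      then show ?thesis using Mmax K by blast
    qed
  qed
  then show ?thesis using LM by blast
qed

lemma jacobson_closed: "jacobson R \<subseteq> carrier R"
  unfolding jacobson_def by blast

lemma left_ideal_principal:
  assumes "y \<in> carrier R" shows "left_ideal {z \<otimes> y | z. z \<in> carrier R} R"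
  (is "left_ideal ?L R")
proof (rule left_idealI)
  show "?L \<subseteq> carrier R" using assms by auto
  show "\<zero> \<in> ?L" using assms by (auto intro!: exI[of _ \<zero>])
  show "a \<oplus> b \<in> ?L" if "a \<in> ?L" "b \<in> ?L" for a b
    using that assms by (auto simp: l_distr[symmetric])
  show "\<ominus> a \<in> ?L" if "a \<in> ?L" for a
    using that assms by (auto simp: l_minus[symmetric])
  show "c \<otimes> a \<in> ?L" if "c \<in> carrier R" "a \<in> ?L" for c a
    using that assms by (auto simp: m_assoc[symmetric])
qed

text \<open>Otherwise \<open>1 - rx\<close> generates a proper left ideal, which lies in a maximal one containing \<open>x\<close>.\<close>
lemma jacobson_one_minus_left_invertible:
  assumes x: "x \<in> jacobson R" and r: "r \<in> carrier R"
  shows "\<exists>v\<in>carrier R. v \<otimes> (\<one> \<ominus> r \<otimes> x) = \<one>"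
proof (rule ccontr)
  assume nex: "\<not> ?thesis"
  have xc: "x \<in> carrier R" using x jacobson_closed by blast
  define y where "y = \<one> \<ominus> r \<otimes> x"
  have yc: "y \<in> carrier R" using xc r y_def by simp
  have "\<one> \<notin> {z \<otimes> y | z. z \<in> carrier R}" using nex y_def by auto
  then obtain M where M: "maximal_left_ideal M R" "{z \<otimes> y | z. z \<in> carrier R} \<subseteq> M"
    using exists_maximal_left_ideal[OF left_ideal_principal[OF yc]] by blast
  have Mli: "left_ideal M R" and Mne: "M \<noteq> carrier R" using M(1) unfolding maximal_left_ideal_def by auto
  have "y \<in> M" using M(2) yc by (auto intro!: exI[of _ \<one>])
  moreover have "r \<otimes> x \<in> M" using x M(1) r left_idealD(5)[OF Mli] unfolding jacobson_def by blast
  ultimately have "y \<oplus> r \<otimes> x \<in> M" using left_idealD(3)[OF Mli] by blast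
  moreover have "y \<oplus> r \<otimes> x = \<one>" unfolding y_def using r xc by (simp add: minus_eq a_assoc l_neg)
  ultimately have "\<one> \<in> M" by simp
  then show False using left_ideal_eq_carrier_if_one[OF Mli] Mne by blast
qed

text \<open>A left inverse \<open>v\<close> of \<open>1 - rx\<close> is itself of the form \<open>1 - r'x\<close>, so it has a left inverse too.\<close>
lemma jacobson_one_minus_Units:
  assumes x: "x \<in> jacobson R" and r: "r \<in> carrier R"
  shows "\<one> \<ominus> r \<otimes> x \<in> Units R"
proof -
  have xc: "x \<in> carrier R" using x jacobson_closed by blast
  define a where "a = r \<otimes> x"
  have ac: "a \<in> carrier R" using a_def xc r by simp
  obtain v where v: "v \<in> carrier R" "v \<otimes> (\<one> \<ominus> a) = \<one>"
    using jacobson_one_minus_left_invertible[OF x r] a_def by blast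
  have "v = v \<otimes> (\<one> \<ominus> a) \<oplus> v \<otimes> a" using v(1) ac by (simp add: ring_simprules)
  then have "v = \<one> \<oplus> v \<otimes> a" using v(2) by simp
  also have "\<dots> = \<one> \<ominus> (\<ominus> v \<otimes> r) \<otimes> x" using v(1) r xc unfolding a_def by (simp add: ring_simprules)
  finally have v1: "v = \<one> \<ominus> (\<ominus> v \<otimes> r) \<otimes> x" .
  obtain w where w: "w \<in> carrier R" "w \<otimes> v = \<one>"
    using jacobson_one_minus_left_invertible[OF x, of "\<ominus> v \<otimes> r"] v r v1 by auto
  have "w = \<one> \<ominus> a" using inv_unique[OF w(2) v(2)] w(1) v(1) ac by simp
  then show ?thesis using Units_if_left_right_inverse[of v "\<one> \<ominus> a" v] w v ac a_def by simp
qed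

lemma left_ideal_add_principal:
  assumes "left_ideal M R" "x \<in> carrier R"
  shows "left_ideal {m \<oplus> r \<otimes> x | m r. m \<in> M \<and> r \<in> carrier R} R"
  (is "left_ideal ?K R")
proof -
  have Mc: "M \<subseteq> carrier R" using left_idealD(1)[OF assms(1)] .
  note M = left_idealD[OF assms(1)] and x = assms(2)
  show ?thesis
  proof (rule left_idealI)
    show "?K \<subseteq> carrier R" using Mc x by auto
    show "\<zero> \<in> ?K" using M(2) x by (auto intro!: exI[of _ \<zero>])
    show "a \<oplus> b \<in> ?K" if ab: "a \<in> ?K" "b \<in> ?K" for a b
    proof -
      obtain m1 r1 m2 r2 where "m1 \<in> M" "r1 \<in> carrier R" "a = m1 \<oplus> r1 \<otimes> x"
        "m2 \<in> M" "r2 \<in> carrier R" "b = m2 \<oplus> r2 \<otimes> x" using ab by blast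
      moreover from this have "a \<oplus> b = (m1 \<oplus> m2) \<oplus> (r1 \<oplus> r2) \<otimes> x"
        using x subsetD[OF Mc] by (simp add: ring_simprules)
      ultimately show ?thesis using M(3) by blast
    qed
    show "\<ominus> a \<in> ?K" if a: "a \<in> ?K" for a
    proof -
      obtain m1 r1 where "m1 \<in> M" "r1 \<in> carrier R" "a = m1 \<oplus> r1 \<otimes> x" using a by blast
      moreover from this have "\<ominus> a = \<ominus> m1 \<oplus> (\<ominus> r1) \<otimes> x"
        using x subsetD[OF Mc] by (simp add: ring_simprules)
      ultimately show ?thesis using M(4) by blast
    qed
    show "c \<otimes> a \<in> ?K" if ca: "c \<in> carrier R" "a \<in> ?K" for c a
    proof -
      obtain m1 r1 where "m1 \<in> M" "r1 \<in> carrier R" "a = m1 \<oplus> r1 \<otimes> x" using ca(2) by blast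
      moreover from this have "c \<otimes> a = c \<otimes> m1 \<oplus> (c \<otimes> r1) \<otimes> x"
        using x ca(1) subsetD[OF Mc] by (simp add: ring_simprules)
      ultimately show ?thesis using M(5) ca(1) by blast
    qed
  qed
qed

text \<open>Conversely, if \<open>x\<close> lies outside a maximal left ideal \<open>M\<close>, then \<open>M + Rx = R\<close>, so the
  unit \<open>1 - rx\<close> lies in \<open>M\<close> for some \<open>r\<close>.\<close>
lemma jacobson_eq: "jacobson R = {x \<in> carrier R. \<forall>r\<in>carrier R. \<one> \<ominus> r \<otimes> x \<in> Units R}"
proof
  show "jacobson R \<subseteq> {x \<in> carrier R. \<forall>r\<in>carrier R. \<one> \<ominus> r \<otimes> x \<in> Units R}"
    using jacobson_one_minus_Units jacobson_closed by blast
next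
  show "{x \<in> carrier R. \<forall>r\<in>carrier R. \<one> \<ominus> r \<otimes> x \<in> Units R} \<subseteq> jacobson R"
  proof (intro subsetI CollectI)
    fix x assume "x \<in> {x \<in> carrier R. \<forall>r\<in>carrier R. \<one> \<ominus> r \<otimes> x \<in> Units R}"
    then have xc: "x \<in> carrier R" and xu: "\<And>r. r \<in> carrier R \<Longrightarrow> \<one> \<ominus> r \<otimes> x \<in> Units R" by auto
    have "x \<in> M" if M: "maximal_left_ideal M R" for M
    proof (rule ccontr)
      assume xM: "x \<notin> M"
      have Mli: "left_ideal M R" and Mne: "M \<noteq> carrier R"
        and Mmax: "\<And>K. left_ideal K R \<Longrightarrow> M \<subseteq> K \<Longrightarrow> K = M \<or> K = carrier R"
        using M unfolding maximal_left_ideal_def by blast+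
      have Mc: "M \<subseteq> carrier R" by (rule left_idealD(1)[OF Mli])
      let ?K = "{m \<oplus> r \<otimes> x | m r. m \<in> M \<and> r \<in> carrier R}"
      have "M \<subseteq> ?K"
      proof
        fix m assume "m \<in> M"
        moreover have "m = m \<oplus> \<zero> \<otimes> x" using \<open>m \<in> M\<close> Mc xc by auto
        ultimately show "m \<in> ?K" by blast
      qed
      moreover have "x \<in> ?K"
      proof -
        have "x = \<zero> \<oplus> \<one> \<otimes> x" using xc by simp
        then show ?thesis using left_idealD(2)[OF Mli] by blast
      qed
      ultimately have "?K = carrier R" using Mmax[OF left_ideal_add_principal[OF Mli xc]] xM by blast
      then have "\<one> \<in> ?K" by simp
      then obtain m r where mr: "m \<in> M" "r \<in> carrier R" "\<one> = m \<oplus> r \<otimes> x" by blast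
      have "m = \<one> \<ominus> r \<otimes> x" using mr subsetD[OF Mc] xc by (simp add: minus_eq a_assoc r_neg)
      then have mu: "m \<in> Units R" using xu[OF mr(2)] by simp
      then have "inv m \<otimes> m \<in> M" using left_idealD(5)[OF Mli _ mr(1)] by blast
      then have "\<one> \<in> M" using mu by simp
      then show False using left_ideal_eq_carrier_if_one[OF Mli] Mne by blast
    qed
    then show "x \<in> jacobson R" unfolding jacobson_def using xc by blast
  qed
qed

lemma left_ideal_jacobson: "left_ideal (jacobson R) R"
proof (rule left_idealI)
  have M: "\<And>M. maximal_left_ideal M R \<Longrightarrow> left_ideal M R" unfolding maximal_left_ideal_def by blast
  show "jacobson R \<subseteq> carrier R" by (rule jacobson_closed)
  show "\<zero> \<in> jacobson R" using left_idealD(2)[OF M] unfolding jacobson_def by blast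
  show "x \<oplus> y \<in> jacobson R" if "x \<in> jacobson R" "y \<in> jacobson R" for x y
    using that left_idealD(3)[OF M] unfolding jacobson_def by auto
  show "\<ominus> x \<in> jacobson R" if "x \<in> jacobson R" for x
    using that left_idealD(4)[OF M] unfolding jacobson_def by auto
  show "r \<otimes> x \<in> jacobson R" if "r \<in> carrier R" "x \<in> jacobson R" for r x
    using that left_idealD(5)[OF M] unfolding jacobson_def by auto
qed

text \<open>Right closure: \<open>1 - r(ax) = 1 - (ra)x\<close> is a unit because \<open>1 - x(ra)\<close> is one.\<close>
lemma ideal_jacobson: "ideal (jacobson R) R"
proof (rule idealI[OF ring_axioms])
  show "subgroup (jacobson R) (add_monoid R)"
    using left_ideal_jacobson additive_subgroup.a_subgroup unfolding left_ideal_def by blast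
  show "x \<otimes> a \<in> jacobson R" if "a \<in> jacobson R" "x \<in> carrier R" for a x
    using left_idealD(5)[OF left_ideal_jacobson] that by blast
  show "a \<otimes> x \<in> jacobson R" if a: "a \<in> jacobson R" and x: "x \<in> carrier R" for a x
  proof -
    have ac: "a \<in> carrier R" using a jacobson_closed by blast
    have "\<one> \<ominus> r \<otimes> (a \<otimes> x) \<in> Units R" if r: "r \<in> carrier R" for r
    proof -
      have "\<one> \<ominus> x \<otimes> (r \<otimes> a) \<in> Units R"
        using jacobson_one_minus_Units[OF a m_closed[OF x r]] r ac x by (simp add: m_assoc)
      then have "\<one> \<ominus> (r \<otimes> a) \<otimes> x \<in> Units R" using Units_one_minus_swap r ac x by simp
      then show ?thesis using r ac x by (simp add: m_assoc)
    qed
    then show ?thesis unfolding jacobson_eq using ac x by simp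
  qed
qed

lemma idempotent_in_jacobson_eq_zero:
  assumes e: "e \<in> jacobson R" and ee: "e \<otimes> e = e"
  shows "e = \<zero>"
proof -
  have ec: "e \<in> carrier R" using e jacobson_closed by blast
  have u: "\<one> \<ominus> e \<in> Units R" using jacobson_one_minus_Units[OF e one_closed] ec by simp
  have "e \<otimes> (\<one> \<ominus> e) = \<zero>" using ec ee by (simp add: ring_simprules)
  then have "e \<otimes> (\<one> \<ominus> e) \<otimes> inv (\<one> \<ominus> e) = \<zero>" using u by simp
  then show ?thesis using u ec by (simp add: m_assoc)
qed

lemma Units_add_jacobson:
  assumes u: "u \<in> Units R" and j: "j \<in> jacobson R"
  shows "u \<oplus> j \<in> Units R"
proof -
  have c: "u \<in> carrier R" "inv u \<in> carrier R" "j \<in> carrier R" using u j jacobson_closed by auto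
  have "u \<otimes> (\<one> \<ominus> (\<ominus> (inv u)) \<otimes> j) = u \<oplus> (u \<otimes> inv u) \<otimes> j"
    using c by (simp add: ring_simprules)
  then have "u \<oplus> j = u \<otimes> (\<one> \<ominus> (\<ominus> (inv u)) \<otimes> j)" using u c by simp
  then show ?thesis using jacobson_one_minus_Units[OF j] u c by simp
qed

lemma ring_hom_jacobson_rcos: "(+>) (jacobson R) \<in> ring_hom R (R Quot jacobson R)"
  by (rule ideal.rcos_ring_hom[OF ideal_jacobson])

lemma ring_jacobson_quotient: "ring (R Quot jacobson R)"
  by (rule ideal.quotient_is_ring[OF ideal_jacobson])

lemma jacobson_rcos_closed: "a \<in> carrier R \<Longrightarrow> jacobson R +> a \<in> carrier (R Quot jacobson R)"
  using ring_hom_closed[OF ring_hom_jacobson_rcos] .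

lemma jacobson_rcos_mult:
  "a \<in> carrier R \<Longrightarrow> b \<in> carrier R \<Longrightarrow>
   (jacobson R +> a) \<otimes>\<^bsub>R Quot jacobson R\<^esub> (jacobson R +> b) = jacobson R +> (a \<otimes> b)"
  using ring_hom_mult[OF ring_hom_jacobson_rcos] by simp

lemma jacobson_rcos_one: "\<one>\<^bsub>R Quot jacobson R\<^esub> = jacobson R +> \<one>"
  using ring_hom_one[OF ring_hom_jacobson_rcos] by simp

lemma jacobson_rcos_pow:
  "a \<in> carrier R \<Longrightarrow> (jacobson R +> a) [^]\<^bsub>R Quot jacobson R\<^esub> (n::nat) = jacobson R +> (a [^] n)"
  using ring_hom_ring.hom_nat_pow[OF ideal.rcos_ring_hom_ring[OF ideal_jacobson]] by simp

lemma jacobson_rcos_eq_iff: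
  "a \<in> carrier R \<Longrightarrow> b \<in> carrier R \<Longrightarrow> jacobson R +> a = jacobson R +> b \<longleftrightarrow> a \<ominus> b \<in> jacobson R"
  using quotient_eq_iff_same_a_r_cos[OF ideal_jacobson] by simp

lemma jacobson_quotient_carrierE:
  assumes "X \<in> carrier (R Quot jacobson R)"
  obtains a where "a \<in> carrier R" "X = jacobson R +> a"
  using assms unfolding FactRing_def A_RCOSETS_def RCOSETS_def a_r_coset_def by auto

lemma jacobson_rcos_Units: "u \<in> Units R \<Longrightarrow> jacobson R +> u \<in> Units (R Quot jacobson R)"
proof -
  assume u: "u \<in> Units R"
  have c: "u \<in> carrier R" "inv u \<in> carrier R" using u by auto
  have "(jacobson R +> inv u) \<otimes>\<^bsub>R Quot jacobson R\<^esub> (jacobson R +> u) = \<one>\<^bsub>R Quot jacobson R\<^esub>"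
    "(jacobson R +> u) \<otimes>\<^bsub>R Quot jacobson R\<^esub> (jacobson R +> inv u) = \<one>\<^bsub>R Quot jacobson R\<^esub>"
    using c u by (simp_all add: jacobson_rcos_mult jacobson_rcos_one)
  then show ?thesis unfolding Units_def using jacobson_rcos_closed c by blast
qed

lemma Units_if_jacobson_rcos_one:
  assumes x: "x \<in> carrier R" and e: "jacobson R +> x = jacobson R +> \<one>"
  shows "x \<in> Units R"
proof -
  have "\<one> \<oplus> (x \<ominus> \<one>) \<in> Units R"
    using Units_add_jacobson[OF Units_one_closed] e jacobson_rcos_eq_iff[OF x one_closed] by simp
  moreover have "\<one> \<oplus> (x \<ominus> \<one>) = x" using x by (simp add: minus_eq a_lcomm[of \<one>] r_neg)
  ultimately show ?thesis by simp
qed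

lemma Units_if_jacobson_rcos_Units:
  assumes v: "v \<in> carrier R" and U: "jacobson R +> v \<in> Units (R Quot jacobson R)"
  shows "v \<in> Units R"
proof -
  obtain W where W: "W \<in> carrier (R Quot jacobson R)"
    "W \<otimes>\<^bsub>R Quot jacobson R\<^esub> (jacobson R +> v) = \<one>\<^bsub>R Quot jacobson R\<^esub>"
    "(jacobson R +> v) \<otimes>\<^bsub>R Quot jacobson R\<^esub> W = \<one>\<^bsub>R Quot jacobson R\<^esub>"
    using U unfolding Units_def by blast
  obtain w where w: "w \<in> carrier R" "W = jacobson R +> w" using jacobson_quotient_carrierE[OF W(1)] by blast
  have wv: "w \<otimes> v \<in> Units R" and vw: "v \<otimes> w \<in> Units R"
    using W w v Units_if_jacobson_rcos_one by (simp_all add: jacobson_rcos_mult jacobson_rcos_one)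
  have c: "inv (w \<otimes> v) \<in> carrier R" "inv (v \<otimes> w) \<in> carrier R" using wv vw by auto
  have l: "(inv (w \<otimes> v) \<otimes> w) \<otimes> v = \<one>" using wv c w v by (simp add: m_assoc)
  have r: "v \<otimes> (w \<otimes> inv (v \<otimes> w)) = \<one>" using vw c w v by (simp add: m_assoc[symmetric])
  show ?thesis using Units_if_left_right_inverse[OF _ v _ l r] c w by simp
qed

end

section \<open>Rings with involution\<close>

locale involutive_ring = ring R for R (structure) +
  fixes s
  assumes star_closed: "a \<in> carrier R \<Longrightarrow> s a \<in> carrier R"
    and star_add: "\<lbrakk>a \<in> carrier R; b \<in> carrier R\<rbrakk> \<Longrightarrow> s (a \<oplus> b) = s a \<oplus> s b"
    and star_mult: "\<lbrakk>a \<in> carrier R; b \<in> carrier R\<rbrakk> \<Longrightarrow> s (a \<otimes> b) = s b \<otimes> s a"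
    and star_star: "a \<in> carrier R \<Longrightarrow> s (s a) = a"

lemma involutive_ringI: "star_ring R s \<Longrightarrow> involutive_ring R s"
  unfolding star_ring_def involutive_ring_def involutive_ring_axioms_def by blast

context involutive_ring
begin

lemma star_one: "s \<one> = \<one>"
proof -
  have c: "s \<one> \<in> carrier R" by (simp add: star_closed)
  have "s \<one> = s \<one> \<otimes> s (s \<one>)" using c star_star[OF one_closed] by simp
  also have "\<dots> = s (s \<one> \<otimes> \<one>)" by (rule star_mult[OF c one_closed, symmetric])
  also have "\<dots> = \<one>" using c by (simp add: star_star)
  finally show ?thesis .
qed

lemma star_zero: "s \<zero> = \<zero>"
proof -
  have c: "s \<zero> \<in> carrier R" by (simp add: star_closed)
  have e: "s \<zero> \<oplus> s \<zero> = s \<zero>" using star_add[of \<zero> \<zero>] by simp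
  have "\<zero> = \<ominus> s \<zero> \<oplus> s \<zero>" using c by (simp add: l_neg)
  also have "\<dots> = \<ominus> s \<zero> \<oplus> (s \<zero> \<oplus> s \<zero>)" using e by simp
  also have "\<dots> = s \<zero>" using c by (simp add: a_assoc[symmetric] l_neg)
  finally show ?thesis by simp
qed

lemma star_uminus: "a \<in> carrier R \<Longrightarrow> s (\<ominus> a) = \<ominus> s a"
proof -
  assume a: "a \<in> carrier R"
  have "s (\<ominus> a) \<oplus> s a = \<zero>" using a by (simp add: star_add[symmetric] l_neg star_zero)
  then show ?thesis using a star_closed minus_equality by (metis a_inv_closed)
qed

lemma star_minus: "a \<in> carrier R \<Longrightarrow> b \<in> carrier R \<Longrightarrow> s (a \<ominus> b) = s a \<ominus> s b"
  by (simp add: minus_eq star_add star_uminus)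

lemma star_Units: "u \<in> Units R \<Longrightarrow> s u \<in> Units R"
proof -
  assume u: "u \<in> Units R"
  have c: "u \<in> carrier R" "inv u \<in> carrier R" using u by auto
  have 1: "s (inv u) \<otimes> s u = \<one>" and 2: "s u \<otimes> s (inv u) = \<one>"
    using c u by (simp_all add: star_mult[symmetric] star_one)
  show ?thesis using Units_if_left_right_inverse[OF _ _ _ 1 2] c star_closed by simp
qed

text \<open>The involution carries the unit \<open>1 - x r*\<close> to \<open>1 - r x*\<close>.\<close>
lemma star_jacobson: "x \<in> jacobson R \<Longrightarrow> s x \<in> jacobson R"
proof -
  assume x: "x \<in> jacobson R"
  have xc: "x \<in> carrier R" using x jacobson_closed by blast
  have "\<one> \<ominus> r \<otimes> s x \<in> Units R" if r: "r \<in> carrier R" for r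
  proof -
    have "x \<otimes> s r \<in> jacobson R" using ideal.I_r_closed[OF ideal_jacobson x] r star_closed by simp
    then have "\<one> \<ominus> x \<otimes> s r \<in> Units R"
      using jacobson_one_minus_Units[OF _ one_closed] xc r star_closed by fastforce
    moreover have "s (\<one> \<ominus> x \<otimes> s r) = \<one> \<ominus> r \<otimes> s x"
      using xc r star_closed by (simp add: star_minus star_one star_mult star_star)
    ultimately show ?thesis using star_Units by metis
  qed
  then show ?thesis unfolding jacobson_eq using xc star_closed by simp
qed

lemma star_image_jacobson: "s ` jacobson R = jacobson R"
proof
  show "s ` jacobson R \<subseteq> jacobson R" using star_jacobson by blast
  show "jacobson R \<subseteq> s ` jacobson R"
  proof
    fix x assume x: "x \<in> jacobson R"
    have "x = s (s x)" using x jacobson_closed star_star by auto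
    then show "x \<in> s ` jacobson R" using star_jacobson[OF x] by blast
  qed
qed

lemma quot_star_jacobson_rcos:
  assumes a: "a \<in> carrier R"
  shows "quot_star s (jacobson R +> a) = jacobson R +> s a"
proof -
  have "s ` (\<Union>h\<in>jacobson R. {h \<oplus> a}) = (\<Union>h\<in>jacobson R. {s (h \<oplus> a)})" by auto
  also have "\<dots> = (\<Union>h\<in>jacobson R. {s h \<oplus> s a})"
    by (rule SUP_cong) (use jacobson_closed a in \<open>auto simp: star_add\<close>)
  also have "\<dots> = (\<Union>h\<in>s ` jacobson R. {h \<oplus> s a})" by blast
  also have "\<dots> = (\<Union>h\<in>jacobson R. {h \<oplus> s a})" using star_image_jacobson by simp
  finally show ?thesis unfolding quot_star_def a_r_coset_def' .
qed

section \<open>Strongly \<open>\<pi>\<close>-\<open>*\<close>-regular rings\<close>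

lemma strongly_pi_star_regularE:
  assumes "strongly_pi_star_regular R s" "a \<in> carrier R"
  obtains m :: nat and e u where "m \<ge> 1" "projection R s e" "u \<in> Units R" "a [^] m = e \<otimes> u"
    "a \<otimes> e = e \<otimes> a" "a \<otimes> u = u \<otimes> a" "e \<otimes> u = u \<otimes> e"
  using assms unfolding strongly_pi_star_regular_def by blast

lemma projectionD:
  assumes "projection R s p" shows "p \<in> carrier R" "p \<otimes> p = p" "s p = p"
  using assms unfolding projection_def by auto

lemma idempotent_is_projection:
  assumes spr: "strongly_pi_star_regular R s" and a: "a \<in> carrier R" and aa: "a \<otimes> a = a"
  shows "projection R s a"
proof -
  obtain m :: nat and e u where m: "m \<ge> 1" and e: "projection R s e" and u: "u \<in> Units R"
    and aeu: "a [^] m = e \<otimes> u" and ae: "a \<otimes> e = e \<otimes> a"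
    using strongly_pi_star_regularE[OF spr a] by blast
  have "a [^] m = a" using idempotent_nat_pow[OF a aa, of "m - 1"] m by simp
  then have "a = e"
    using idempotent_eq_if_commuting_unit_factor[OF a projectionD(1)[OF e] u aa projectionD(2)[OF e] _ ae] aeu
    by simp
  then show ?thesis using e by simp
qed

text \<open>The element \<open>p + px(1 - p)\<close> is idempotent, hence a projection; comparing it with its
  adjoint \<open>p + (1 - p)x*p\<close> shows \<open>px(1 - p) = 0\<close>.\<close>
lemma projection_mult_complement:
  assumes spr: "strongly_pi_star_regular R s" and p: "projection R s p" and x: "x \<in> carrier R"
  shows "(p \<otimes> x) \<otimes> (\<one> \<ominus> p) = \<zero>"
proof -
  define q where "q = \<one> \<ominus> p"
  have pc: "p \<in> carrier R" and pp: "p \<otimes> p = p" and sp: "s p = p" using projectionD[OF p] by auto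
  have qc: "q \<in> carrier R" unfolding q_def using pc by simp
  have pq: "p \<otimes> q = \<zero>" and qp: "q \<otimes> p = \<zero>" unfolding q_def using pc pp by (simp_all add: ring_simprules)
  have sq: "s q = q" unfolding q_def using pc sp by (simp add: star_minus star_one)
  define a where "a = p \<oplus> (p \<otimes> x) \<otimes> q"
  have ac: "a \<in> carrier R" unfolding a_def using pc qc x by simp
  have "a \<otimes> a = p \<otimes> p \<oplus> ((p \<otimes> p) \<otimes> x \<otimes> q \<oplus> ((p \<otimes> x) \<otimes> (q \<otimes> p) \<oplus> ((p \<otimes> x) \<otimes> (q \<otimes> p)) \<otimes> (x \<otimes> q)))"
    unfolding a_def using pc qc x by (simp add: ring_simprules)
  also have "\<dots> = a" unfolding a_def using pp qp pc qc x by simp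
  finally have "a \<otimes> a = a" .
  then have "s a = a" using projectionD(3)[OF idempotent_is_projection[OF spr ac]] by simp
  moreover have "s a = p \<oplus> q \<otimes> (s x \<otimes> p)" unfolding a_def using pc qc x
    by (simp add: star_add star_mult sp sq)
  ultimately have "p \<oplus> q \<otimes> (s x \<otimes> p) = p \<oplus> (p \<otimes> x) \<otimes> q" unfolding a_def by simp
  then have e: "q \<otimes> (s x \<otimes> p) = (p \<otimes> x) \<otimes> q"
    using add.Units_l_cancel[of p "q \<otimes> (s x \<otimes> p)" "(p \<otimes> x) \<otimes> q"] pc qc x star_closed by simp
  have "(p \<otimes> x) \<otimes> q = p \<otimes> ((p \<otimes> x) \<otimes> q)" using pp pc x qc by (simp add: m_assoc[symmetric])
  also have "\<dots> = (p \<otimes> q) \<otimes> (s x \<otimes> p)" using e pc x qc star_closed by (simp add: m_assoc)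
  also have "\<dots> = \<zero>" using pq pc x star_closed by simp
  finally show ?thesis unfolding q_def .
qed

lemma projection_central:
  assumes spr: "strongly_pi_star_regular R s" and p: "projection R s p"
  shows "central R p"
proof -
  define q where "q = \<one> \<ominus> p"
  have pc: "p \<in> carrier R" and sp: "s p = p" using projectionD[OF p] by auto
  have qc: "q \<in> carrier R" unfolding q_def using pc by simp
  have sq: "s q = q" unfolding q_def using pc sp by (simp add: star_minus star_one)
  have s1: "p \<oplus> q = \<one>" unfolding q_def using pc by (simp add: minus_eq a_lcomm[of p] r_neg)
  have "p \<otimes> x = x \<otimes> p" if x: "x \<in> carrier R" for x
  proof -
    have 1: "(p \<otimes> x) \<otimes> q = \<zero>" using projection_mult_complement[OF spr p x] q_def by simp
    have "s ((p \<otimes> s x) \<otimes> q) = \<zero>"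
      using projection_mult_complement[OF spr p star_closed[OF x]] q_def by (simp add: star_zero)
    then have 2: "q \<otimes> (x \<otimes> p) = \<zero>" using pc qc x star_closed by (simp add: star_mult star_star sp sq)
    have "p \<otimes> x = (p \<otimes> x) \<otimes> (p \<oplus> q)" using s1 pc x by simp
    also have "\<dots> = p \<otimes> (x \<otimes> p)" using 1 pc qc x by (simp add: r_distr m_assoc)
    also have "\<dots> = (p \<oplus> q) \<otimes> (x \<otimes> p)" using 2 pc qc x by (simp add: l_distr)
    also have "\<dots> = x \<otimes> p" using s1 pc x by simp
    finally show ?thesis .
  qed
  then show ?thesis unfolding central_def using pc by blast
qed

text \<open>For \<open>b = rn\<close> write \<open>b\<^sup>k = fv\<close>; then \<open>f = (v\<^sup>-\<^sup>1 b\<^sup>k\<^sup>-\<^sup>1 r) n\<close> and \<open>f\<close> is central,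
  so the nilpotency of \<open>n\<close> forces \<open>f = 0\<close>. Hence \<open>b\<close> is nilpotent and \<open>1 - b\<close> is a unit.\<close>
lemma nilpotent_in_jacobson:
  assumes spr: "strongly_pi_star_regular R s" and n: "n \<in> carrier R" and nt: "n [^] (t::nat) = \<zero>"
  shows "n \<in> jacobson R"
proof -
  have "\<one> \<ominus> r \<otimes> n \<in> Units R" if r: "r \<in> carrier R" for r
  proof -
    define b where "b = r \<otimes> n"
    have bc: "b \<in> carrier R" unfolding b_def using r n by simp
    obtain k :: nat and f v where k: "k \<ge> 1" and f: "projection R s f" and v: "v \<in> Units R"
      and bfv: "b [^] k = f \<otimes> v" and bv: "b \<otimes> v = v \<otimes> b"
      using strongly_pi_star_regularE[OF spr bc] by blast
    have fc: "f \<in> carrier R" and ff: "f \<otimes> f = f" using projectionD[OF f] by auto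
    have vc: "v \<in> carrier R" "inv v \<in> carrier R" using v by auto
    obtain k' where k': "k = Suc k'" using k by (cases k) auto
    have "b [^] k \<otimes> inv v = f" using bfv fc vc v by (simp add: m_assoc)
    moreover have "b [^] k \<otimes> inv v = inv v \<otimes> b [^] k"
      using group_commutes_pow[OF Units_inv_commute[OF bc v bv] bc vc(2)] .
    moreover have "inv v \<otimes> b [^] k = (inv v \<otimes> b [^] k' \<otimes> r) \<otimes> n"
      unfolding k' b_def using vc r n by (simp add: m_assoc)
    ultimately have "(inv v \<otimes> b [^] k' \<otimes> r) \<otimes> n = f" by simp
    moreover have "inv v \<otimes> b [^] k' \<otimes> r \<in> carrier R" using vc bc r by simp
    ultimately have "f = \<zero>"
      using central_idempotent_eq_zero_if_nilpotent_factor[OF projection_central[OF spr f] ff _ n _ nt]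
      by blast
    then have "b [^] k = \<zero>" using bfv vc by simp
    then show ?thesis unfolding b_def using Units_one_minus_nilpotent[OF m_closed[OF r n]] by simp
  qed
  then show ?thesis unfolding jacobson_eq using n by simp
qed

lemma nil_jacobson:
  assumes spr: "strongly_pi_star_regular R s"
  shows "nil_set R (jacobson R)"
  unfolding nil_set_def
proof
  fix x assume x: "x \<in> jacobson R"
  have xc: "x \<in> carrier R" using x jacobson_closed by blast
  obtain m :: nat and e u where m: "m \<ge> 1" and e: "projection R s e" and u: "u \<in> Units R"
    and xeu: "x [^] m = e \<otimes> u"
    using strongly_pi_star_regularE[OF spr xc] by blast
  have ec: "e \<in> carrier R" and ee: "e \<otimes> e = e" using projectionD[OF e] by auto
  have uc: "u \<in> carrier R" "inv u \<in> carrier R" using u by auto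
  have "x [^] m = x [^] (m - 1) \<otimes> x" using m by (simp add: nat_pow_Suc[symmetric])
  then have "x [^] m \<in> jacobson R" using ideal.I_l_closed[OF ideal_jacobson x] xc by simp
  moreover have "x [^] m \<otimes> inv u = e" using xeu ec uc u by (simp add: m_assoc)
  ultimately have "e \<in> jacobson R" using ideal.I_r_closed[OF ideal_jacobson _ uc(2)] by metis
  then have "e = \<zero>" using idempotent_in_jacobson_eq_zero ee by blast
  then have "x [^] m = \<zero>" using xeu uc by simp
  then show "\<exists>n::nat. x [^] n = \<zero>" by blast
qed

lemma projection_jacobson_rcos:
  assumes e: "projection R s e"
  shows "projection (R Quot jacobson R) (quot_star s) (jacobson R +> e)"
  using projectionD[OF e] jacobson_rcos_closed jacobson_rcos_mult quot_star_jacobson_rcos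
  unfolding projection_def by simp

lemma strongly_pi_star_regular_jacobson_quotient:
  assumes spr: "strongly_pi_star_regular R s"
  shows "strongly_pi_star_regular (R Quot jacobson R) (quot_star s)"
  unfolding strongly_pi_star_regular_def
proof
  fix A assume "A \<in> carrier (R Quot jacobson R)"
  then obtain a where a: "a \<in> carrier R" and A: "A = jacobson R +> a"
    using jacobson_quotient_carrierE by blast
  obtain m :: nat and e u where m: "m \<ge> 1" and e: "projection R s e" and u: "u \<in> Units R"
    and aeu: "a [^] m = e \<otimes> u" and ae: "a \<otimes> e = e \<otimes> a" and au: "a \<otimes> u = u \<otimes> a"
    and eu: "e \<otimes> u = u \<otimes> e"
    using strongly_pi_star_regularE[OF spr a] by blast
  have ec: "e \<in> carrier R" and uc: "u \<in> carrier R" using projectionD[OF e] u by auto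
  show "\<exists>E U (m::nat). m \<ge> 1 \<and> projection (R Quot jacobson R) (quot_star s) E \<and>
      U \<in> Units (R Quot jacobson R) \<and> A [^]\<^bsub>R Quot jacobson R\<^esub> m = E \<otimes>\<^bsub>R Quot jacobson R\<^esub> U \<and>
      A \<otimes>\<^bsub>R Quot jacobson R\<^esub> E = E \<otimes>\<^bsub>R Quot jacobson R\<^esub> A \<and>
      A \<otimes>\<^bsub>R Quot jacobson R\<^esub> U = U \<otimes>\<^bsub>R Quot jacobson R\<^esub> A \<and>
      E \<otimes>\<^bsub>R Quot jacobson R\<^esub> U = U \<otimes>\<^bsub>R Quot jacobson R\<^esub> E"
  proof (rule exI[of _ "jacobson R +> e"], rule exI[of _ "jacobson R +> u"], rule exI[of _ m], intro conjI)
    show "m \<ge> 1" "projection (R Quot jacobson R) (quot_star s) (jacobson R +> e)"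
      "jacobson R +> u \<in> Units (R Quot jacobson R)"
      using m projection_jacobson_rcos[OF e] jacobson_rcos_Units[OF u] by auto
    show "A [^]\<^bsub>R Quot jacobson R\<^esub> m = (jacobson R +> e) \<otimes>\<^bsub>R Quot jacobson R\<^esub> (jacobson R +> u)"
      unfolding A using a ec uc aeu by (simp add: jacobson_rcos_pow jacobson_rcos_mult)
    show "A \<otimes>\<^bsub>R Quot jacobson R\<^esub> (jacobson R +> e) = (jacobson R +> e) \<otimes>\<^bsub>R Quot jacobson R\<^esub> A"
      "A \<otimes>\<^bsub>R Quot jacobson R\<^esub> (jacobson R +> u) = (jacobson R +> u) \<otimes>\<^bsub>R Quot jacobson R\<^esub> A"
      "(jacobson R +> e) \<otimes>\<^bsub>R Quot jacobson R\<^esub> (jacobson R +> u) =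
         (jacobson R +> u) \<otimes>\<^bsub>R Quot jacobson R\<^esub> (jacobson R +> e)"
      unfolding A using a ec uc ae au eu by (simp_all add: jacobson_rcos_mult)
  qed
qed

text \<open>With \<open>a\<^sup>m = eu\<close>, \<open>e\<close> central and \<open>q = 1 - e\<close>: the element \<open>w = ea + q\<close> is a unit since
  \<open>w\<^sup>m = eu + q\<close>, and \<open>a - ew = qa\<close> is nilpotent, so \<open>a \<equiv> ew\<close> modulo \<open>J\<close>.\<close>
lemma strongly_star_regular_jacobson_quotient:
  assumes spr: "strongly_pi_star_regular R s"
  shows "strongly_star_regular (R Quot jacobson R) (quot_star s)"
  unfolding strongly_star_regular_def
proof
  fix A assume "A \<in> carrier (R Quot jacobson R)"
  then obtain a where a: "a \<in> carrier R" and A: "A = jacobson R +> a"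
    using jacobson_quotient_carrierE by blast
  obtain m :: nat and e u where m: "m \<ge> 1" and e: "projection R s e" and u: "u \<in> Units R"
    and aeu: "a [^] m = e \<otimes> u"
    using strongly_pi_star_regularE[OF spr a] by blast
  have ec: "e \<in> carrier R" and ee: "e \<otimes> e = e" using projectionD[OF e] by auto
  have uc: "u \<in> carrier R" using u by auto
  have ecen: "central R e" by (rule projection_central[OF spr e])
  define q where "q = \<one> \<ominus> e"
  note q = central_idempotent_complement[OF ecen ee, folded q_def]
  have qc: "q \<in> carrier R" using q(1) central_closed by blast
  define w where "w = e \<otimes> a \<oplus> q"
  have wc: "w \<in> carrier R" unfolding w_def using ec a qc by simp
  have "w [^] m = e \<otimes> u \<oplus> q"
    unfolding w_def q_def using central_idempotent_corner_pow[OF ecen ee a] aeu ee ec uc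
    by (simp add: m_assoc[symmetric])
  then have "w [^] Suc (m - 1) \<in> Units R"
    using central_idempotent_corner_Units[OF ecen ee u] m unfolding q_def by simp
  then have wU: "w \<in> Units R" by (rule Units_if_nat_pow_Units[OF wc])
  have "(q \<otimes> a) [^] Suc m = ((q \<otimes> a) [^] m \<otimes> q) \<otimes> a" using qc a by (simp add: m_assoc)
  also have "\<dots> = ((q \<otimes> e) \<otimes> u) \<otimes> a"
    using central_idempotent_mult_nat_pow[OF q(1,2) a, of m] aeu qc ec uc by (simp add: m_assoc)
  also have "\<dots> = \<zero>" using q(4) uc a by simp
  finally have "q \<otimes> a \<in> jacobson R" using nilpotent_in_jacobson[OF spr] qc a by blast
  moreover have "a \<ominus> e \<otimes> w = q \<otimes> a"
    unfolding w_def q_def using a ec ee q(3)[unfolded q_def] by (simp add: ring_simprules m_assoc[symmetric])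
  ultimately have "A = (jacobson R +> e) \<otimes>\<^bsub>R Quot jacobson R\<^esub> (jacobson R +> w)"
    unfolding A using jacobson_rcos_eq_iff[OF a] ec wc by (simp add: jacobson_rcos_mult)
  moreover then have "A = (jacobson R +> w) \<otimes>\<^bsub>R Quot jacobson R\<^esub> (jacobson R +> e)"
    using ec wc central_commute[OF ecen wc] by (simp add: jacobson_rcos_mult)
  ultimately show "\<exists>P U. projection (R Quot jacobson R) (quot_star s) P \<and> U \<in> Units (R Quot jacobson R) \<and>
      A = P \<otimes>\<^bsub>R Quot jacobson R\<^esub> U \<and> A = U \<otimes>\<^bsub>R Quot jacobson R\<^esub> P"
    using projection_jacobson_rcos[OF e] jacobson_rcos_Units[OF wU] by blast
qed

lemma idempotent_jacobson_quotient_lifts: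
  assumes spr: "strongly_pi_star_regular R s" and E: "idempotent_el (R Quot jacobson R) E"
  shows "\<exists>p. projection R s p \<and> central R p \<and> jacobson R +> p = E"
proof -
  have Ec: "E \<in> carrier (R Quot jacobson R)" and EE: "E \<otimes>\<^bsub>R Quot jacobson R\<^esub> E = E"
    using E unfolding idempotent_el_def by auto
  obtain a where a: "a \<in> carrier R" and A: "E = jacobson R +> a"
    using jacobson_quotient_carrierE[OF Ec] by blast
  obtain m :: nat and e u where m: "m \<ge> 1" and e: "projection R s e" and u: "u \<in> Units R"
    and aeu: "a [^] m = e \<otimes> u" and ae: "a \<otimes> e = e \<otimes> a"
    using strongly_pi_star_regularE[OF spr a] by blast
  have ec: "e \<in> carrier R" and ee: "e \<otimes> e = e" using projectionD[OF e] by auto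
  have "E = E [^]\<^bsub>R Quot jacobson R\<^esub> Suc (m - 1)"
    using ring.idempotent_nat_pow[OF ring_jacobson_quotient Ec EE] by simp
  also have "\<dots> = (jacobson R +> e) \<otimes>\<^bsub>R Quot jacobson R\<^esub> (jacobson R +> u)"
    unfolding A using a ec u aeu m by (simp add: jacobson_rcos_pow jacobson_rcos_mult Units_closed)
  finally have Eeu: "E = (jacobson R +> e) \<otimes>\<^bsub>R Quot jacobson R\<^esub> (jacobson R +> u)" .
  have "E = jacobson R +> e"
  proof (rule ring.idempotent_eq_if_commuting_unit_factor[OF ring_jacobson_quotient Ec
        jacobson_rcos_closed[OF ec] jacobson_rcos_Units[OF u] EE _ Eeu])
    show "(jacobson R +> e) \<otimes>\<^bsub>R Quot jacobson R\<^esub> (jacobson R +> e) = jacobson R +> e"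
      using ec ee by (simp add: jacobson_rcos_mult)
    show "E \<otimes>\<^bsub>R Quot jacobson R\<^esub> (jacobson R +> e) = (jacobson R +> e) \<otimes>\<^bsub>R Quot jacobson R\<^esub> E"
      unfolding A using a ec ae by (simp add: jacobson_rcos_mult)
  qed
  then show ?thesis using e projection_central[OF spr e] by blast
qed

lemma strongly_pi_star_regular_decomposition_lift:
  assumes nil: "nil_set R (jacobson R)" and a: "a \<in> carrier R" and m: "m \<ge> 1"
    and pcen: "central R p" and p: "projection R s p"
    and v: "v \<in> carrier R" and vU: "jacobson R +> v \<in> Units (R Quot jacobson R)"
    and eq: "jacobson R +> a [^] (m::nat) = jacobson R +> p \<otimes> v"
  shows "\<exists>e u (N::nat). N \<ge> 1 \<and> projection R s e \<and> u \<in> Units R \<and> a [^] N = e \<otimes> u \<and>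
           a \<otimes> e = e \<otimes> a \<and> a \<otimes> u = u \<otimes> a \<and> e \<otimes> u = u \<otimes> e"
proof -
  have pc: "p \<in> carrier R" and pp: "p \<otimes> p = p" using projectionD[OF p] by auto
  define q where "q = \<one> \<ominus> p"
  note q = central_idempotent_complement[OF pcen pp, folded q_def]
  have qc: "q \<in> carrier R" using central_closed[OF q(1)] .
  define b where "b = a [^] m"
  have bc: "b \<in> carrier R" unfolding b_def using a by simp
  define j where "j = b \<ominus> p \<otimes> v"
  have jJ: "j \<in> jacobson R" unfolding j_def b_def using jacobson_rcos_eq_iff eq a pc v by simp
  have jc: "j \<in> carrier R" using jJ jacobson_closed by blast
  have bj: "b = p \<otimes> v \<oplus> j" unfolding j_def using bc pc v
    by (simp add: minus_eq a_lcomm[of "p \<otimes> v"] r_neg)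
  define c where "c = p \<otimes> b \<oplus> q"
  have "c = (p \<otimes> v \<oplus> q) \<oplus> p \<otimes> j"
    unfolding c_def bj using pc v jc qc pp by (simp add: r_distr m_assoc[symmetric] a_ac)
  moreover have "p \<otimes> v \<oplus> q \<in> Units R"
    unfolding q_def by (rule central_idempotent_corner_Units[OF pcen pp Units_if_jacobson_rcos_Units[OF v vU]])
  ultimately have cU: "c \<in> Units R"
    using Units_add_jacobson ideal.I_l_closed[OF ideal_jacobson jJ pc] by simp
  have "q \<otimes> b = (q \<otimes> p) \<otimes> v \<oplus> q \<otimes> j" unfolding bj using pc v jc qc by (simp add: r_distr m_assoc)
  then have "q \<otimes> b = q \<otimes> j" using q(4) v qc jc by simp
  then have "q \<otimes> b \<in> jacobson R" using ideal.I_l_closed[OF ideal_jacobson jJ qc] by simp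
  then obtain t :: nat where "(q \<otimes> b) [^] t = \<zero>" using nil unfolding nil_set_def by blast
  then have bK: "b [^] Suc t = p \<otimes> b [^] Suc t"
    using central_idempotent_absorbs_pow[OF pcen pp bc] unfolding q_def by simp
  define N where "N = m * Suc t"
  have aN: "a [^] N = b [^] Suc t" unfolding N_def b_def by (simp only: nat_pow_pow[OF a])
  define u where "u = p \<otimes> a [^] N \<oplus> q"
  have "u = c [^] Suc t"
    unfolding u_def c_def q_def aN by (rule central_idempotent_corner_pow[OF pcen pp bc, symmetric])
  then have uU: "u \<in> Units R" using Units_nat_pow[OF cU, of "Suc t"] by (simp del: nat_pow_Suc)
  have "p \<otimes> u = (p \<otimes> p) \<otimes> a [^] N \<oplus> p \<otimes> q"
    unfolding u_def using pc qc a by (simp add: r_distr m_assoc)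
  also have "\<dots> = a [^] N" using pp q(3) bK aN a bc by simp
  finally have "p \<otimes> u = a [^] N" .
  moreover have "a \<otimes> u = u \<otimes> a"
  proof -
    have "a \<otimes> u = p \<otimes> (a \<otimes> a [^] N) \<oplus> q \<otimes> a"
      unfolding u_def using a pc qc central_commute[OF pcen a] central_commute[OF q(1) a]
      by (simp add: r_distr m_assoc[symmetric])
    also have "\<dots> = u \<otimes> a"
      unfolding u_def using a pc qc nat_pow_comm[OF a, of 1 N] by (simp add: l_distr m_assoc)
    finally show ?thesis .
  qed
  moreover have "N \<ge> 1" unfolding N_def using m by simp
  ultimately show ?thesis
    using p uU central_commute[OF pcen a] central_commute[OF pcen Units_closed[OF uU]]
    by (intro exI[of _ p] exI[of _ u] exI[of _ N]) simp
qed

lemma strongly_pi_star_regular_if_quotient_lifts_projections: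
  assumes Qspr: "strongly_pi_star_regular (R Quot jacobson R) (quot_star s)"
    and nil: "nil_set R (jacobson R)" and cen: "\<forall>p. projection R s p \<longrightarrow> central R p"
    and lift: "\<forall>P. projection (R Quot jacobson R) (quot_star s) P \<longrightarrow>
                  (\<exists>p. projection R s p \<and> jacobson R +> p = P)"
  shows "strongly_pi_star_regular R s"
  unfolding strongly_pi_star_regular_def
proof
  fix a assume a: "a \<in> carrier R"
  have "\<exists>E U (m::nat). m \<ge> 1 \<and> projection (R Quot jacobson R) (quot_star s) E \<and>
      U \<in> Units (R Quot jacobson R) \<and>
      (jacobson R +> a) [^]\<^bsub>R Quot jacobson R\<^esub> m = E \<otimes>\<^bsub>R Quot jacobson R\<^esub> U \<and>
      (jacobson R +> a) \<otimes>\<^bsub>R Quot jacobson R\<^esub> E = E \<otimes>\<^bsub>R Quot jacobson R\<^esub> (jacobson R +> a) \<and>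
      (jacobson R +> a) \<otimes>\<^bsub>R Quot jacobson R\<^esub> U = U \<otimes>\<^bsub>R Quot jacobson R\<^esub> (jacobson R +> a) \<and>
      E \<otimes>\<^bsub>R Quot jacobson R\<^esub> U = U \<otimes>\<^bsub>R Quot jacobson R\<^esub> E"
    using Qspr jacobson_rcos_closed[OF a] unfolding strongly_pi_star_regular_def by (rule bspec)
  then obtain E U and m :: nat where m: "m \<ge> 1" and E: "projection (R Quot jacobson R) (quot_star s) E"
    and U: "U \<in> Units (R Quot jacobson R)"
    and AEU: "(jacobson R +> a) [^]\<^bsub>R Quot jacobson R\<^esub> m = E \<otimes>\<^bsub>R Quot jacobson R\<^esub> U"
    by blast
  obtain p where p: "projection R s p" and pE: "jacobson R +> p = E" using lift E by blast
  obtain v where v: "v \<in> carrier R" and vU: "U = jacobson R +> v"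
    using jacobson_quotient_carrierE[of U] U unfolding Units_def by blast
  have eq: "jacobson R +> a [^] m = jacobson R +> p \<otimes> v"
    using AEU pE[symmetric] vU a projectionD(1)[OF p] v by (simp add: jacobson_rcos_pow jacobson_rcos_mult)
  show "\<exists>e u (m::nat). m \<ge> 1 \<and> projection R s e \<and> u \<in> Units R \<and> a [^] m = e \<otimes> u \<and>
        a \<otimes> e = e \<otimes> a \<and> a \<otimes> u = u \<otimes> a \<and> e \<otimes> u = u \<otimes> e"
    by (rule strongly_pi_star_regular_decomposition_lift[OF nil a m _ p v _ eq]) (use cen p U vU in simp_all)
qed

lemma strongly_pi_star_regular_if_quotient_strongly_star_regular:
  assumes Qssr: "strongly_star_regular (R Quot jacobson R) (quot_star s)"
    and nil: "nil_set R (jacobson R)"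
    and lift: "\<forall>E. idempotent_el (R Quot jacobson R) E \<longrightarrow>
                  (\<exists>p. projection R s p \<and> central R p \<and> jacobson R +> p = E)"
  shows "strongly_pi_star_regular R s"
  unfolding strongly_pi_star_regular_def
proof
  fix a assume a: "a \<in> carrier R"
  have "\<exists>P U. projection (R Quot jacobson R) (quot_star s) P \<and> U \<in> Units (R Quot jacobson R) \<and>
      jacobson R +> a = P \<otimes>\<^bsub>R Quot jacobson R\<^esub> U \<and> jacobson R +> a = U \<otimes>\<^bsub>R Quot jacobson R\<^esub> P"
    using Qssr jacobson_rcos_closed[OF a] unfolding strongly_star_regular_def by (rule bspec)
  then obtain P U where P: "projection (R Quot jacobson R) (quot_star s) P"
    and U: "U \<in> Units (R Quot jacobson R)" and APU: "jacobson R +> a = P \<otimes>\<^bsub>R Quot jacobson R\<^esub> U"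
    by blast
  have "idempotent_el (R Quot jacobson R) P" using P unfolding projection_def idempotent_el_def by blast
  then obtain p where p: "projection R s p" and pcen: "central R p" and pP: "jacobson R +> p = P"
    using lift by blast
  obtain v where v: "v \<in> carrier R" and vU: "U = jacobson R +> v"
    using jacobson_quotient_carrierE[of U] U unfolding Units_def by blast
  have eq: "jacobson R +> a [^] (1::nat) = jacobson R +> p \<otimes> v"
    using APU pP[symmetric] vU a projectionD(1)[OF p] v by (simp add: jacobson_rcos_mult)
  show "\<exists>e u (m::nat). m \<ge> 1 \<and> projection R s e \<and> u \<in> Units R \<and> a [^] m = e \<otimes> u \<and>
        a \<otimes> e = e \<otimes> a \<and> a \<otimes> u = u \<otimes> a \<and> e \<otimes> u = u \<otimes> e"
    by (rule strongly_pi_star_regular_decomposition_lift[OF nil a _ pcen p v _ eq]) (use U vU in simp_all)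
qed

lemma strongly_pi_star_regular_iff_lifting_projections:
  "strongly_pi_star_regular R s \<longleftrightarrow>
     strongly_pi_star_regular (R Quot jacobson R) (quot_star s) \<and> nil_set R (jacobson R) \<and>
     (\<forall>p. projection R s p \<longrightarrow> central R p) \<and>
     (\<forall>P. projection (R Quot jacobson R) (quot_star s) P \<longrightarrow>
        (\<exists>p. projection R s p \<and> jacobson R +> p = P))"
  (is "_ \<longleftrightarrow> ?rhs")
proof
  assume spr: "strongly_pi_star_regular R s"
  have "idempotent_el (R Quot jacobson R) P" if "projection (R Quot jacobson R) (quot_star s) P" for P
    using that unfolding projection_def idempotent_el_def by blast
  then show ?rhs
    using strongly_pi_star_regular_jacobson_quotient[OF spr] nil_jacobson[OF spr]
      projection_central[OF spr] idempotent_jacobson_quotient_lifts[OF spr] by blast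
next
  assume ?rhs
  then show "strongly_pi_star_regular R s"
    using strongly_pi_star_regular_if_quotient_lifts_projections by blast
qed

lemma strongly_pi_star_regular_iff_lifting_idempotents:
  "strongly_pi_star_regular R s \<longleftrightarrow>
     strongly_star_regular (R Quot jacobson R) (quot_star s) \<and> nil_set R (jacobson R) \<and>
     (\<forall>E. idempotent_el (R Quot jacobson R) E \<longrightarrow>
        (\<exists>p. projection R s p \<and> central R p \<and> jacobson R +> p = E))"
  (is "_ \<longleftrightarrow> ?rhs")
proof
  assume spr: "strongly_pi_star_regular R s"
  then show ?rhs
    using strongly_star_regular_jacobson_quotient[OF spr] nil_jacobson[OF spr]
      idempotent_jacobson_quotient_lifts[OF spr] by blast
next
  assume ?rhs
  then show "strongly_pi_star_regular R s"
    using strongly_pi_star_regular_if_quotient_strongly_star_regular by blast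
qed

end

theorem corollary3p7:
  fixes R :: "('a, 'b) ring_scheme" and s :: "'a \<Rightarrow> 'a"
  assumes "star_ring R s"
  defines "J \<equiv> jacobson R"
  shows "(strongly_pi_star_regular R s \<longleftrightarrow>
            (strongly_pi_star_regular (R Quot J) (quot_star s) \<and> nil_set R J \<and>
             (\<forall>p. projection R s p \<longrightarrow> central R p) \<and>
             (\<forall>P. projection (R Quot J) (quot_star s) P \<longrightarrow>
                  (\<exists>p. projection R s p \<and> J +>\<^bsub>R\<^esub> p = P)))) \<and>
         (strongly_pi_star_regular R s \<longleftrightarrow>
            (strongly_star_regular (R Quot J) (quot_star s) \<and> nil_set R J \<and>
             (\<forall>E. idempotent_el (R Quot J) E \<longrightarrow>
                  (\<exists>p. projection R s p \<and> central R p \<and> J +>\<^bsub>R\<^esub> p = E))))"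
proof -
  interpret involutive_ring R s by (rule involutive_ringI[OF assms(1)])
  show ?thesis unfolding J_def
    using strongly_pi_star_regular_iff_lifting_projections strongly_pi_star_regular_iff_lifting_idempotents
    by (rule conjI)
qed

end
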